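(* Let $P$ be a weakly ranked poset and $f,g\in\mathscr{I}_{1/2}(P)$. Then there exists a single $P$-kernel $\kappa$ whose right KLS-function is $f$ and whose left KLS-function is $g$ if and only if $\overline{\bar g f}=\bar g f$.
   Context: A weakly ranked poset is a locally finite poset $P$ (all intervals finite) with a weak rank function: integers $r_{xy}$ for $x\le y$ with $r_{xy}>0$ for $x<y$ and $r_{xy}+r_{yz}=r_{xz}$. $I(P)=\prod_{x\le y}\mathbb{Z}[t]$ with components $f_{xy}(t)$ is a ring under convolution $(fg)_{xz}=\sum_{x\le y\le z}f_{xy}g_{yz}$ with identity $\delta$ ($\delta_{xx}=1$, $\delta_{xy}=0$ for $x<y$). $\mathscr{I}(P)$ is the subring of $f$ with $\deg f_{xy}\le r_{xy}$; it has the involution $\bar f_{xy}(t)=t^{r_{xy}}f_{xy}(t^{-1})$. $\mathscr{I}_{1/2}(P)$ is the set of $f\in\mathscr{I}(P)$ with $f_{xx}=1$ for all $x$ and $\deg f_{xy}<r_{xy}/2$ for $x<y$. A $P$-kernel is $\kappa\in\mathscr{I}(P)$ with $\kappa_{xx}=1$ for all $x$ and $\kappa^{-1}=\bar\kappa$. For a $P$-kernel $\kappa$ there are unique $f,g\in\mathscr{I}_{1/2}(P)$ with $\bar f=\kappa f$ and $\bar g=g\kappa$; $f$ is the right and $g$ the left KLS-function of $\kappa$. *)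

theory Defs
  imports "HOL-Computational_Algebra.Polynomial"
begin

text \<open>A poset is modelled by a type of class order. Elements of the incidence
ring I(P) are functions x y -> int poly, normalised to be 0 when not x <= y.\<close>

type_synonym 'a inc = "'a \<Rightarrow> 'a \<Rightarrow> int poly"

definition weakly_ranked_poset :: "('a::order \<Rightarrow> 'a \<Rightarrow> int) \<Rightarrow> bool" where
  "weakly_ranked_poset r \<longleftrightarrow>
     (\<forall>x z::'a. finite {y. x \<le> y \<and> y \<le> z}) \<and>
     (\<forall>x y. x < y \<longrightarrow> r x y > 0) \<and>
     (\<forall>x y z. x \<le> y \<and> y \<le> z \<longrightarrow> r x y + r y z = r x z)"

definition inc_mult :: "'a::order inc \<Rightarrow> 'a inc \<Rightarrow> 'a inc" where
  "inc_mult f g = (\<lambda>x z. \<Sum>y\<in>{y. x \<le> y \<and> y \<le> z}. f x y * g y z)"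

definition inc_delta :: "'a::order inc" where
  "inc_delta = (\<lambda>x y. if x = y then 1 else 0)"

definition in_inc :: "'a::order inc \<Rightarrow> bool" where
  "in_inc f \<longleftrightarrow> (\<forall>x y. \<not> x \<le> y \<longrightarrow> f x y = 0)"

definition in_scrI :: "('a::order \<Rightarrow> 'a \<Rightarrow> int) \<Rightarrow> 'a inc \<Rightarrow> bool" where
  "in_scrI r f \<longleftrightarrow> in_inc f \<and> (\<forall>x y. x \<le> y \<longrightarrow> int (degree (f x y)) \<le> r x y)"

text \<open>Involution: bar f_xy(t) = t^(r_xy) f_xy(1/t).\<close>
definition bar_poly :: "int \<Rightarrow> int poly \<Rightarrow> int poly" where
  "bar_poly n p = (\<Sum>i\<le>nat n. monom (coeff p i) (nat n - i))"

definition inc_bar :: "('a::order \<Rightarrow> 'a \<Rightarrow> int) \<Rightarrow> 'a inc \<Rightarrow> 'a inc" where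
  "inc_bar r f = (\<lambda>x y. if x \<le> y then bar_poly (r x y) (f x y) else 0)"

definition in_scrI_half :: "('a::order \<Rightarrow> 'a \<Rightarrow> int) \<Rightarrow> 'a inc \<Rightarrow> bool" where
  "in_scrI_half r f \<longleftrightarrow> in_scrI r f \<and> (\<forall>x. f x x = 1) \<and>
     (\<forall>x y. x < y \<longrightarrow> 2 * int (degree (f x y)) < r x y)"

definition P_kernel :: "('a::order \<Rightarrow> 'a \<Rightarrow> int) \<Rightarrow> 'a inc \<Rightarrow> bool" where
  "P_kernel r \<kappa> \<longleftrightarrow> in_scrI r \<kappa> \<and> (\<forall>x. \<kappa> x x = 1) \<and>
     inc_mult \<kappa> (inc_bar r \<kappa>) = inc_delta \<and> inc_mult (inc_bar r \<kappa>) \<kappa> = inc_delta"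

end

theory Submission imports Defs begin

text \<open>The involution is multiplicative on \<open>\<I>(P)\<close>, because \<open>r\<close> is additive along chains.
Hence \<open>bar (bar g * f) = g * bar f\<close>, and if \<open>bar f = \<kappa> f\<close>, \<open>bar g = g \<kappa>\<close> then
\<open>g * bar f = g \<kappa> f = bar g * f\<close>. Conversely, \<open>f\<close> has unit diagonal and so is invertible
(its inverse is a finite Neumann series), and \<open>\<kappa> = bar f * f\<^sup>-\<^sup>1\<close> is a \<open>P\<close>-kernel
with \<open>\<kappa> f = bar f\<close>; the hypothesis \<open>g * bar f = bar g * f\<close> then gives \<open>g \<kappa> = bar g\<close>.\<close>

lemma coeff_bar_poly:
  "coeff (bar_poly n p) k = (if k \<le> nat n then coeff p (nat n - k) else 0)"
proof -
  have "coeff (bar_poly n p) k = (\<Sum>i\<le>nat n. if nat n - i = k then coeff p i else 0)"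
    by (simp add: bar_poly_def coeff_sum coeff_monom)
  also have "\<dots> = (\<Sum>i\<le>nat n. if i = nat n - k \<and> k \<le> nat n then coeff p i else 0)"
    by (rule sum.cong) auto
  also have "\<dots> = (if k \<le> nat n then coeff p (nat n - k) else 0)"
    by (cases "k \<le> nat n") (simp_all add: sum.delta)
  finally show ?thesis .
qed

lemma degree_bar_poly: "degree (bar_poly n p) \<le> nat n"
  by (rule degree_le) (simp add: coeff_bar_poly)

lemma bar_poly_bar_poly: "degree p \<le> nat n \<Longrightarrow> bar_poly n (bar_poly n p) = p"
  by (rule poly_eqI) (auto simp: coeff_bar_poly coeff_eq_0)

lemma bar_poly_sum: "bar_poly n (\<Sum>i\<in>A. p i) = (\<Sum>i\<in>A. bar_poly n (p i))"
  by (rule poly_eqI) (simp add: coeff_bar_poly coeff_sum)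

lemma bar_poly_0 [simp]: "bar_poly n 0 = 0"
  by (rule poly_eqI) (simp add: coeff_bar_poly)

lemma bar_poly_0_1 [simp]: "bar_poly 0 1 = 1"
  by (rule poly_eqI) (simp add: coeff_bar_poly coeff_1)

lemma bar_poly_eq_reflect_poly:
  "degree p \<le> N \<Longrightarrow> bar_poly (int N) p = monom 1 (N - degree p) * reflect_poly p"
  by (rule poly_eqI) (auto simp: coeff_bar_poly coeff_monom_mult coeff_reflect_poly coeff_eq_0)

lemma bar_poly_mult:
  assumes "degree p \<le> M" "degree q \<le> N"
  shows "bar_poly (int (M + N)) (p * q) = bar_poly (int M) p * bar_poly (int N) q"
proof (cases "p = 0 \<or> q = 0")
  case False
  hence deg: "degree (p * q) = degree p + degree q" by (simp add: degree_mult_eq)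
  have "bar_poly (int (M + N)) (p * q) = monom 1 (M + N - degree (p * q)) * reflect_poly (p * q)"
    using assms deg by (intro bar_poly_eq_reflect_poly) simp
  also have "\<dots> = (monom 1 (M - degree p) * reflect_poly p) * (monom 1 (N - degree q) * reflect_poly q)"
    using assms by (simp add: deg reflect_poly_mult mult_monom algebra_simps)
  also have "\<dots> = bar_poly (int M) p * bar_poly (int N) q"
    using assms by (simp add: bar_poly_eq_reflect_poly)
  finally show ?thesis .
qed auto

lemma in_inc_inc_mult: "in_inc (inc_mult f g)"
  unfolding in_inc_def inc_mult_def by (auto intro!: sum.neutral dest: order_trans)

lemma in_inc_inc_delta: "in_inc inc_delta"
  by (simp add: in_inc_def inc_delta_def)

lemma in_inc_inc_bar: "in_inc (inc_bar r f)"
  by (simp add: in_inc_def inc_bar_def)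

lemma inc_mult_diag: "inc_mult f g x x = f x x * g x x"
proof -
  have "{y. x \<le> y \<and> y \<le> x} = {x}" by auto
  thus ?thesis by (simp add: inc_mult_def)
qed

fun inc_power :: "'a::order inc \<Rightarrow> nat \<Rightarrow> 'a inc" where
  "inc_power m 0 = inc_delta"
| "inc_power m (Suc k) = inc_mult m (inc_power m k)"

definition inc_neumann :: "'a::order inc \<Rightarrow> 'a inc" where
  "inc_neumann m = (\<lambda>x z. \<Sum>k\<le>card {y. x \<le> y \<and> y \<le> z}. inc_power m k x z)"

definition inc_inverse :: "'a::order inc \<Rightarrow> 'a inc" where
  "inc_inverse f = inc_neumann (\<lambda>x y. inc_delta x y - f x y)"

lemma inc_power_diag: "inc_power m k x x = m x x ^ k"
  by (induction k) (simp_all add: inc_delta_def inc_mult_diag)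

lemma in_inc_inc_power: "in_inc (inc_power m k)"
  by (cases k) (simp_all add: in_inc_inc_delta in_inc_inc_mult)

lemma inc_neumann_diag: "m x x = 0 \<Longrightarrow> inc_neumann m x x = 1"
proof -
  assume "m x x = 0"
  moreover have "card {y. x \<le> y \<and> y \<le> x} = 1"
    by (subgoal_tac "{y. x \<le> y \<and> y \<le> x} = {x}") auto
  ultimately show ?thesis by (simp add: inc_neumann_def inc_power_diag)
qed

lemma in_inc_inc_neumann: "in_inc (inc_neumann m)"
  unfolding in_inc_def inc_neumann_def
  by (simp add: in_inc_inc_power[unfolded in_inc_def, rule_format])

lemma in_inc_inc_inverse: "in_inc (inc_inverse f)"
  by (simp add: inc_inverse_def in_inc_inc_neumann)

lemma inc_inverse_diag: "f x x = 1 \<Longrightarrow> inc_inverse f x x = 1"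
  by (simp add: inc_inverse_def inc_neumann_diag inc_delta_def)

context
  assumes locally_finite: "\<And>x z :: 'a::order. finite {y. x \<le> y \<and> y \<le> z}"
begin

lemma inc_mult_assoc:
  fixes f g h :: "'a inc"
  shows "inc_mult (inc_mult f g) h = inc_mult f (inc_mult g h)"
proof (intro ext)
  fix x z :: 'a
  let ?I = "{y. x \<le> y \<and> y \<le> z}"
  have "inc_mult (inc_mult f g) h x z = (\<Sum>w\<in>?I. \<Sum>y\<in>{y. x \<le> y \<and> y \<le> w}. f x y * g y w * h w z)"
    by (simp add: inc_mult_def sum_distrib_right)
  also have "\<dots> = (\<Sum>w\<in>?I. \<Sum>y\<in>{y. y \<in> ?I \<and> y \<le> w}. f x y * g y w * h w z)"
    by (rule sum.cong[OF refl], rule sum.cong) (auto intro: order_trans)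
  also have "\<dots> = (\<Sum>y\<in>?I. \<Sum>w\<in>{w. w \<in> ?I \<and> y \<le> w}. f x y * g y w * h w z)"
    by (rule sum.swap_restrict[OF locally_finite locally_finite])
  also have "\<dots> = (\<Sum>y\<in>?I. \<Sum>w\<in>{w. y \<le> w \<and> w \<le> z}. f x y * (g y w * h w z))"
    by (rule sum.cong[OF refl], rule sum.cong) (auto intro: order_trans simp: mult.assoc)
  also have "\<dots> = inc_mult f (inc_mult g h) x z"
    by (simp add: inc_mult_def sum_distrib_left)
  finally show "inc_mult (inc_mult f g) h x z = inc_mult f (inc_mult g h) x z" .
qed

lemma inc_mult_delta_left:
  fixes f :: "'a inc"
  assumes "in_inc f"
  shows "inc_mult inc_delta f = f"
proof (intro ext)
  fix x z
  have "inc_mult inc_delta f x z = (\<Sum>y\<in>{y. x \<le> y \<and> y \<le> z}. if y = x then f y z else 0)"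
    unfolding inc_mult_def inc_delta_def by (rule sum.cong) auto
  also have "\<dots> = f x z"
    using assms locally_finite by (subst sum.delta) (auto simp: in_inc_def)
  finally show "inc_mult inc_delta f x z = f x z" .
qed

lemma inc_mult_delta_right:
  fixes f :: "'a inc"
  assumes "in_inc f"
  shows "inc_mult f inc_delta = f"
proof (intro ext)
  fix x z
  have "inc_mult f inc_delta x z = (\<Sum>y\<in>{y. x \<le> y \<and> y \<le> z}. if y = z then f x y else 0)"
    unfolding inc_mult_def inc_delta_def by (rule sum.cong) auto
  also have "\<dots> = f x z"
    using assms locally_finite by (subst sum.delta) (auto simp: in_inc_def)
  finally show "inc_mult f inc_delta x z = f x z" .
qed

lemma inc_power_eq_0:
  fixes m :: "'a inc"
  assumes nil: "\<And>x. m x x = 0"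
  shows "card {y. x \<le> y \<and> y \<le> z} \<le> k \<Longrightarrow> inc_power m k x z = 0"
proof (induction k arbitrary: x z)
  case 0
  hence "\<not> x \<le> z" using locally_finite[of x z] by auto
  thus ?case by (simp add: inc_delta_def)
next
  case (Suc k)
  have "m x y * inc_power m k y z = 0" if y: "x \<le> y" "y \<le> z" for y
  proof (cases "y = x")
    case False
    with y have "x \<notin> {w. y \<le> w \<and> w \<le> z}" by auto
    moreover have "x \<in> {w. x \<le> w \<and> w \<le> z}" using y by (auto intro: order_trans)
    moreover have "{w. y \<le> w \<and> w \<le> z} \<subseteq> {w. x \<le> w \<and> w \<le> z}"
      using y by (auto intro: order_trans)
    ultimately have "{w. y \<le> w \<and> w \<le> z} \<subset> {w. x \<le> w \<and> w \<le> z}" by blast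
    hence "card {w. y \<le> w \<and> w \<le> z} < card {w. x \<le> w \<and> w \<le> z}"
      by (rule psubset_card_mono[OF locally_finite])
    thus ?thesis using Suc by simp
  qed (simp add: nil)
  thus ?case by (auto simp: inc_mult_def intro!: sum.neutral)
qed

lemma inc_mult_one_minus_neumann:
  fixes m :: "'a inc"
  assumes nil: "\<And>x. m x x = 0"
  shows "inc_mult (\<lambda>x y. inc_delta x y - m x y) (inc_neumann m) = inc_delta"
proof (intro ext)
  fix x z :: 'a
  let ?f = "\<lambda>x y. inc_delta x y - m x y"
  define N where "N = card {y. x \<le> y \<and> y \<le> z}"
  have truncate: "inc_neumann m y z = (\<Sum>k\<le>N. inc_power m k y z)" if "x \<le> y" for y
  proof -
    have "card {w. y \<le> w \<and> w \<le> z} \<le> N"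
      unfolding N_def by (rule card_mono[OF locally_finite]) (use that in \<open>auto intro: order_trans\<close>)
    thus ?thesis unfolding inc_neumann_def
      by (intro sum.mono_neutral_left) (auto intro: inc_power_eq_0[OF nil])
  qed
  have step: "inc_mult ?f (inc_power m k) = (\<lambda>x z. inc_power m k x z - inc_power m (Suc k) x z)" for k
    using inc_mult_delta_left[OF in_inc_inc_power]
    by (simp add: inc_mult_def algebra_simps sum_subtractf fun_eq_iff)
  have "inc_mult ?f (inc_neumann m) x z = (\<Sum>y\<in>{y. x \<le> y \<and> y \<le> z}. ?f x y * (\<Sum>k\<le>N. inc_power m k y z))"
    unfolding inc_mult_def by (intro sum.cong) (simp_all add: truncate)
  also have "\<dots> = (\<Sum>k\<le>N. inc_mult ?f (inc_power m k) x z)"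
    unfolding inc_mult_def by (simp add: sum_distrib_left sum.swap[of _ "{..N}"])
  also have "\<dots> = inc_power m 0 x z - inc_power m (Suc N) x z"
    unfolding step by (rule sum_telescope)
  also have "inc_power m (Suc N) x z = 0"
    by (rule inc_power_eq_0[OF nil]) (simp add: N_def)
  finally show "inc_mult ?f (inc_neumann m) x z = inc_delta x z" by simp
qed

lemma inc_mult_inverse_right:
  fixes f :: "'a inc"
  assumes "\<And>x. f x x = 1"
  shows "inc_mult f (inc_inverse f) = inc_delta"
proof -
  have "inc_mult f (inc_inverse f) =
        inc_mult (\<lambda>x y. inc_delta x y - (inc_delta x y - f x y))
          (inc_neumann (\<lambda>x y. inc_delta x y - f x y))"
    by (simp add: inc_inverse_def)
  also have "\<dots> = inc_delta"
    by (rule inc_mult_one_minus_neumann) (simp add: assms inc_delta_def)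
  finally show ?thesis .
qed

lemma inc_mult_inverse_left:
  fixes f :: "'a inc"
  assumes "in_inc f" and "\<And>x. f x x = 1"
  shows "inc_mult (inc_inverse f) f = inc_delta"
proof -
  let ?h = "inc_inverse f"
  have hh: "inc_mult ?h (inc_inverse ?h) = inc_delta"
    by (rule inc_mult_inverse_right) (simp add: inc_inverse_diag assms(2))
  have "f = inc_mult f (inc_mult ?h (inc_inverse ?h))"
    unfolding hh using inc_mult_delta_right[OF assms(1)] by simp
  also have "\<dots> = inc_inverse ?h"
    unfolding inc_mult_assoc[symmetric] inc_mult_inverse_right[OF assms(2)]
    by (rule inc_mult_delta_left[OF in_inc_inc_inverse])
  finally show ?thesis using hh by simp
qed

end

context
  fixes r :: "'a::order \<Rightarrow> 'a \<Rightarrow> int"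
  assumes weakly_ranked: "weakly_ranked_poset r"
begin

lemma finite_interval: "finite {y. x \<le> y \<and> y \<le> (z :: 'a)}"
  using weakly_ranked by (simp add: weakly_ranked_poset_def)

lemma rank_additive: "x \<le> y \<Longrightarrow> y \<le> z \<Longrightarrow> r x y + r y z = r x z"
  using weakly_ranked by (simp add: weakly_ranked_poset_def)

lemma rank_diag [simp]: "r x x = 0"
  using rank_additive[of x x x] by simp

lemma rank_nonneg: "x \<le> y \<Longrightarrow> 0 \<le> r x y"
  using weakly_ranked by (cases "x = y") (auto simp: weakly_ranked_poset_def less_le)

lemma in_scrI_degree_le: "in_scrI r f \<Longrightarrow> x \<le> y \<Longrightarrow> degree (f x y) \<le> nat (r x y)"
  by (simp add: in_scrI_def le_nat_iff rank_nonneg)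

lemma in_scrI_intro:
  "in_inc f \<Longrightarrow> (\<And>x y. x \<le> y \<Longrightarrow> degree (f x y) \<le> nat (r x y)) \<Longrightarrow> in_scrI r f"
  by (simp add: in_scrI_def flip: le_nat_iff[OF rank_nonneg])

lemma in_scrI_inc_delta: "in_scrI r inc_delta"
  by (rule in_scrI_intro[OF in_inc_inc_delta]) (simp add: inc_delta_def)

lemma in_scrI_diff:
  assumes "in_scrI r f" "in_scrI r g"
  shows "in_scrI r (\<lambda>x y. f x y - g x y)"
proof (rule in_scrI_intro)
  show "in_inc (\<lambda>x y. f x y - g x y)"
    using assms by (simp add: in_scrI_def in_inc_def)
  show "degree (f x y - g x y) \<le> nat (r x y)" if "x \<le> y" for x y
    using assms that by (intro degree_diff_le in_scrI_degree_le)
qed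

lemma in_scrI_inc_mult:
  assumes f: "in_scrI r f" and g: "in_scrI r g"
  shows "in_scrI r (inc_mult f g)"
proof (rule in_scrI_intro[OF in_inc_inc_mult])
  fix x z :: 'a assume "x \<le> z"
  show "degree (inc_mult f g x z) \<le> nat (r x z)"
    unfolding inc_mult_def
  proof (rule degree_sum_le[OF finite_interval])
    fix y assume "y \<in> {y. x \<le> y \<and> y \<le> z}"
    hence y: "x \<le> y" "y \<le> z" by auto
    have "degree (f x y * g y z) \<le> degree (f x y) + degree (g y z)" by (rule degree_mult_le)
    also have "\<dots> \<le> nat (r x y) + nat (r y z)"
      using f g y by (intro add_mono in_scrI_degree_le)
    also have "\<dots> = nat (r x z)"
      using rank_additive[OF y] rank_nonneg y by (simp flip: nat_add_distrib)
    finally show "degree (f x y * g y z) \<le> nat (r x z)" .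
  qed
qed

lemma in_scrI_inc_power: "in_scrI r m \<Longrightarrow> in_scrI r (inc_power m k)"
  by (induction k) (simp_all add: in_scrI_inc_delta in_scrI_inc_mult)

lemma in_scrI_inc_neumann:
  assumes "in_scrI r m"
  shows "in_scrI r (inc_neumann m)"
proof (rule in_scrI_intro[OF in_inc_inc_neumann])
  fix x z :: 'a assume "x \<le> z"
  then show "degree (inc_neumann m x z) \<le> nat (r x z)"
    unfolding inc_neumann_def
    by (intro degree_sum_le) (simp_all add: in_scrI_degree_le in_scrI_inc_power assms)
qed

lemma in_scrI_inc_inverse: "in_scrI r f \<Longrightarrow> in_scrI r (inc_inverse f)"
  unfolding inc_inverse_def by (intro in_scrI_inc_neumann in_scrI_diff in_scrI_inc_delta)

lemma in_scrI_inc_bar: "in_scrI r (inc_bar r f)"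
  by (rule in_scrI_intro[OF in_inc_inc_bar]) (simp add: inc_bar_def degree_bar_poly)

lemma inc_bar_diag: "f x x = 1 \<Longrightarrow> inc_bar r f x x = 1"
  by (simp add: inc_bar_def)

lemma inc_bar_inc_delta: "inc_bar r inc_delta = inc_delta"
  by (auto simp: inc_bar_def inc_delta_def intro!: ext)

lemma inc_bar_inc_bar: "in_scrI r f \<Longrightarrow> inc_bar r (inc_bar r f) = f"
  by (intro ext) (auto simp: inc_bar_def bar_poly_bar_poly in_scrI_degree_le in_scrI_def in_inc_def)

lemma inc_bar_inc_mult:
  assumes f: "in_scrI r f" and g: "in_scrI r g"
  shows "inc_bar r (inc_mult f g) = inc_mult (inc_bar r f) (inc_bar r g)"
proof (intro ext)
  fix x z
  show "inc_bar r (inc_mult f g) x z = inc_mult (inc_bar r f) (inc_bar r g) x z"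
  proof (cases "x \<le> z")
    case False
    have "inc_mult (inc_bar r f) (inc_bar r g) x z = 0"
      using False in_inc_inc_mult[of "inc_bar r f" "inc_bar r g"] by (simp add: in_inc_def)
    with False show ?thesis by (simp add: inc_bar_def)
  next
    case True
    have "inc_bar r (inc_mult f g) x z = (\<Sum>y\<in>{y. x \<le> y \<and> y \<le> z}. bar_poly (r x z) (f x y * g y z))"
      using True by (simp add: inc_bar_def inc_mult_def bar_poly_sum)
    also have "\<dots> = inc_mult (inc_bar r f) (inc_bar r g) x z"
      unfolding inc_mult_def
    proof (rule sum.cong[OF refl])
      fix y assume "y \<in> {y. x \<le> y \<and> y \<le> z}"
      hence y: "x \<le> y" "y \<le> z" by auto
      have "r x z = int (nat (r x y) + nat (r y z))"
        using rank_additive[OF y] rank_nonneg y by simp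
      then show "bar_poly (r x z) (f x y * g y z) = inc_bar r f x y * inc_bar r g y z"
        using bar_poly_mult[OF in_scrI_degree_le[OF f] in_scrI_degree_le[OF g]] y rank_nonneg
        by (simp add: inc_bar_def)
    qed
    finally show ?thesis .
  qed
qed

lemma inc_bar_mult_bar:
  "in_scrI r f \<Longrightarrow> in_scrI r g \<Longrightarrow> inc_bar r (inc_mult (inc_bar r g) f) = inc_mult g (inc_bar r f)"
  by (simp add: inc_bar_inc_mult in_scrI_inc_bar inc_bar_inc_bar)

lemma P_kernel_bar_mult_inverse:
  assumes f: "in_scrI r f" and f_diag: "\<And>x. f x x = 1"
  shows "P_kernel r (inc_mult (inc_bar r f) (inc_inverse f))"
proof -
  note assoc = inc_mult_assoc[OF finite_interval]
  note delta_left = inc_mult_delta_left[OF finite_interval]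
  let ?h = "inc_inverse f"
  let ?\<kappa> = "inc_mult (inc_bar r f) ?h"
  have h: "in_scrI r ?h" by (rule in_scrI_inc_inverse[OF f])
  have fh: "inc_mult f ?h = inc_delta"
    by (rule inc_mult_inverse_right[OF finite_interval f_diag])
  have hf: "inc_mult ?h f = inc_delta"
    using f by (intro inc_mult_inverse_left[OF finite_interval] f_diag) (simp add: in_scrI_def)
  have bar_\<kappa>: "inc_bar r ?\<kappa> = inc_mult f (inc_bar r ?h)"
    using inc_bar_inc_mult[OF in_scrI_inc_bar h] inc_bar_inc_bar[OF f] by simp
  have "inc_mult ?\<kappa> (inc_bar r ?\<kappa>) = inc_mult (inc_bar r f) (inc_mult (inc_mult ?h f) (inc_bar r ?h))"
    unfolding bar_\<kappa> assoc ..
  also have "\<dots> = inc_bar r (inc_mult f ?h)"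
    unfolding hf delta_left[OF in_inc_inc_bar] inc_bar_inc_mult[OF f h] ..
  finally have right: "inc_mult ?\<kappa> (inc_bar r ?\<kappa>) = inc_delta"
    unfolding fh inc_bar_inc_delta .
  have "inc_mult (inc_bar r ?\<kappa>) ?\<kappa> = inc_mult f (inc_mult (inc_mult (inc_bar r ?h) (inc_bar r f)) ?h)"
    unfolding bar_\<kappa> assoc ..
  also have "\<dots> = inc_mult f (inc_mult (inc_bar r (inc_mult ?h f)) ?h)"
    unfolding inc_bar_inc_mult[OF h f] ..
  finally have left: "inc_mult (inc_bar r ?\<kappa>) ?\<kappa> = inc_delta"
    unfolding hf inc_bar_inc_delta delta_left[OF in_inc_inc_inverse] fh .
  have "?\<kappa> x x = 1" for x
    by (simp add: inc_mult_diag inc_bar_diag inc_inverse_diag f_diag)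
  with right left show ?thesis
    unfolding P_kernel_def using in_scrI_inc_mult[OF in_scrI_inc_bar h] by blast
qed

lemma inc_mult_bar_mult_inverse:
  assumes f: "in_scrI r f" and f_diag: "\<And>x. f x x = 1"
  shows "inc_mult (inc_mult (inc_bar r f) (inc_inverse f)) f = inc_bar r f"
proof -
  have "inc_mult (inc_inverse f) f = inc_delta"
    using f by (intro inc_mult_inverse_left[OF finite_interval] f_diag) (simp add: in_scrI_def)
  then show ?thesis
    unfolding inc_mult_assoc[OF finite_interval]
    by (simp add: inc_mult_delta_right[OF finite_interval in_inc_inc_bar])
qed

lemma inc_mult_bar_mult_inverse_left:
  assumes f_diag: "\<And>x. f x x = 1"
    and gf: "inc_mult g (inc_bar r f) = inc_mult (inc_bar r g) f"
  shows "inc_mult g (inc_mult (inc_bar r f) (inc_inverse f)) = inc_bar r g"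
  unfolding inc_mult_assoc[OF finite_interval, symmetric] gf
  unfolding inc_mult_assoc[OF finite_interval] inc_mult_inverse_right[OF finite_interval f_diag]
  by (rule inc_mult_delta_right[OF finite_interval in_inc_inc_bar])

end

theorem proposition2p7:
  fixes r :: "'a::order \<Rightarrow> 'a \<Rightarrow> int" and f g :: "'a inc"
  assumes "weakly_ranked_poset r" and "in_scrI_half r f" and "in_scrI_half r g"
  shows "(\<exists>\<kappa>. P_kernel r \<kappa> \<and> inc_bar r f = inc_mult \<kappa> f \<and> inc_bar r g = inc_mult g \<kappa>)
         \<longleftrightarrow> inc_bar r (inc_mult (inc_bar r g) f) = inc_mult (inc_bar r g) f"
proof -
  note W = assms(1)
  have f: "in_scrI r f" and f_diag: "\<And>x. f x x = 1" and g: "in_scrI r g"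
    using assms(2,3) by (auto simp: in_scrI_half_def)
  have bar_gf: "inc_bar r (inc_mult (inc_bar r g) f) = inc_mult g (inc_bar r f)"
    by (rule inc_bar_mult_bar[OF W f g])
  show ?thesis
  proof
    assume "\<exists>\<kappa>. P_kernel r \<kappa> \<and> inc_bar r f = inc_mult \<kappa> f \<and> inc_bar r g = inc_mult g \<kappa>"
    then obtain \<kappa> where "inc_bar r f = inc_mult \<kappa> f" "inc_bar r g = inc_mult g \<kappa>" by blast
    then show "inc_bar r (inc_mult (inc_bar r g) f) = inc_mult (inc_bar r g) f"
      unfolding bar_gf by (simp add: inc_mult_assoc[OF finite_interval[OF W]])
  next
    assume "inc_bar r (inc_mult (inc_bar r g) f) = inc_mult (inc_bar r g) f"
    then have "inc_mult g (inc_bar r f) = inc_mult (inc_bar r g) f" by (simp add: bar_gf)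
    with P_kernel_bar_mult_inverse[OF W f f_diag] inc_mult_bar_mult_inverse[OF W f f_diag]
      inc_mult_bar_mult_inverse_left[where f = f, OF W f_diag]
    show "\<exists>\<kappa>. P_kernel r \<kappa> \<and> inc_bar r f = inc_mult \<kappa> f \<and> inc_bar r g = inc_mult g \<kappa>"
      by metis
  qed
qed

end
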